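(* Let $X$ be a continuous vector field on $\mathbb{S}^1$ of finite width, and let $\lambda^\pm$ be the infinitesimal earthquake measure of $\mathcal{E}_X^\pm$. Then $\lVert\lambda^\pm\rVert_{\mathrm{Th}}\le\frac{2\sqrt2}{1-\tanh(1)}w(X)$.
   Context: $\mathbb{R}^{1,2}$ is $\mathbb{R}^3$ with $\langle x,y\rangle=-x_0y_0+x_1y_1+x_2y_2$; $\mathbb{H}^2$ is identified with the Klein disk $\mathbb{D}^2$ via $\Pi(x_0,x_1,x_2)=(x_1/x_0,x_2/x_0)$, boundary $\mathbb{S}^1$. A vector field $X$ on $\mathbb{S}^1$ is $X(z)=iz\phi_X(z)$. $\phi_X^-(\eta)=\sup\{a(\eta):a\text{ affine},a|_{\mathbb{S}^1}\le\phi_X\}$, $\phi_X^+(\eta)=\inf\{a(\eta):a\text{ affine},a|_{\mathbb{S}^1}\ge\phi_X\}$, $\eta\in\overline{\mathbb{D}^2}$. Width $w(X)=\sup_{\eta\in\mathbb{D}^2}\frac{\phi_X^+(\eta)-\phi_X^-(\eta)}{\sqrt{1-|\eta|^2}}$. $\Sigma^-(\eta)$ is the set of $\sigma\in\mathbb{R}^{1,2}$ with $\langle(1,\xi),\sigma\rangle\le\phi_X^-(\xi)$ for all $\xi\in\mathbb{D}^2$ and equality at $\eta$; $\Sigma^+(\eta)$ likewise with $\ge\phi_X^+$. $\mathcal{E}_X^\pm(\eta)=\mathrm{d}_{(1,\eta)}\Pi((1,\eta)\boxtimes\sigma^\pm(\eta))$, where $\langle x\boxtimes y,v\rangle=\det(x,y,v)$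 and $\sigma^\pm(\eta)$ is the single point or the midpoint of the segment $\Sigma^\pm(\eta)$; these are the left/right infinitesimal earthquakes extending $X$. Their geodesic laminations $\lambda^\pm$ are the connected components of $S^\pm(\sigma)\setminus\mathrm{Int}S^\pm(\sigma)$, $S^\pm(\sigma)=\{\eta\in\mathbb{D}^2:\phi^\pm_X(\eta)=\langle(1,\eta),\sigma\rangle\}$, over all $\sigma$ lying in some $\Sigma^\pm(\eta)$. The infinitesimal earthquake (bending) measure: for an arc $c:[0,1]\to\mathbb{D}^2$, $\lambda^\pm(c)=\inf\sum_{i=0}^{n-1}\sqrt{\langle\sigma_i-\sigma_{i+1},\sigma_i-\sigma_{i+1}\rangle}$ over $0=t_0<\dots<t_n=1$ and $\sigma_i\in\Sigma^\pm(c(t_i))$. Thurston norm $\lVert\lambda\rVert_{\mathrm{Th}}=\sup_I\lambda(I)$ over geodesic segments $I$ of hyperbolic length $1$ transverse to the support of $\lambda$. *)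

theory Defs
  imports "HOL-Analysis.Analysis"
begin

text \<open>Points of R^{1,2} are triples (x0,x1,x2). The Klein disk D^2 and its boundary S^1
  are identified with the unit disk / unit circle in the complex plane (= R^2).\<close>

definition mink :: "real \<times> real \<times> real \<Rightarrow> real \<times> real \<times> real \<Rightarrow> real" where
  "mink x y = - fst x * fst y + fst (snd x) * fst (snd y) + snd (snd x) * snd (snd y)"

definition lift :: "complex \<Rightarrow> real \<times> real \<times> real" where
  "lift \<eta> = (1, Re \<eta>, Im \<eta>)"

definition aff :: "real \<Rightarrow> real \<Rightarrow> real \<Rightarrow> complex \<Rightarrow> real" where
  "aff c p q \<eta> = c + p * Re \<eta> + q * Im \<eta>"

text \<open>A vector field X on S^1, written X(z) = i z \<phi>_X(z) with \<phi>_X real.\<close>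
definition tangent_field :: "(complex \<Rightarrow> complex) \<Rightarrow> bool" where
  "tangent_field X \<longleftrightarrow> (\<forall>z \<in> sphere 0 1. X z / (\<i> * z) \<in> \<real>)"

definition phiX :: "(complex \<Rightarrow> complex) \<Rightarrow> complex \<Rightarrow> real" where
  "phiX X z = Re (X z / (\<i> * z))"

definition phi_minus :: "(complex \<Rightarrow> complex) \<Rightarrow> complex \<Rightarrow> real" where
  "phi_minus X \<eta> = Sup {aff c p q \<eta> | c p q. \<forall>z \<in> sphere 0 1. aff c p q z \<le> phiX X z}"

definition phi_plus :: "(complex \<Rightarrow> complex) \<Rightarrow> complex \<Rightarrow> real" where
  "phi_plus X \<eta> = Inf {aff c p q \<eta> | c p q. \<forall>z \<in> sphere 0 1. aff c p q z \<ge> phiX X z}"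

text \<open>Width w(X) (possibly infinite, hence extended real).\<close>
definition width :: "(complex \<Rightarrow> complex) \<Rightarrow> ereal" where
  "width X = (SUP \<eta> \<in> ball 0 1.
      ereal ((phi_plus X \<eta> - phi_minus X \<eta>) / sqrt (1 - (cmod \<eta>)\<^sup>2)))"

definition Sigma_minus :: "(complex \<Rightarrow> complex) \<Rightarrow> complex \<Rightarrow> (real \<times> real \<times> real) set" where
  "Sigma_minus X \<eta> = {\<sigma>. (\<forall>\<xi> \<in> ball 0 1. mink (lift \<xi>) \<sigma> \<le> phi_minus X \<xi>)
                          \<and> mink (lift \<eta>) \<sigma> = phi_minus X \<eta>}"

definition Sigma_plus :: "(complex \<Rightarrow> complex) \<Rightarrow> complex \<Rightarrow> (real \<times> real \<times> real) set" where
  "Sigma_plus X \<eta> = {\<sigma>. (\<forall>\<xi> \<in> ball 0 1. mink (lift \<xi>) \<sigma> \<ge> phi_plus X \<xi>)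
                          \<and> mink (lift \<eta>) \<sigma> = phi_plus X \<eta>}"

definition Sset :: "(complex \<Rightarrow> real) \<Rightarrow> real \<times> real \<times> real \<Rightarrow> complex set" where
  "Sset \<phi> \<sigma> = {\<eta> \<in> ball 0 1. \<phi> \<eta> = mink (lift \<eta>) \<sigma>}"

definition leaves :: "(complex \<Rightarrow> real) \<Rightarrow> (complex \<Rightarrow> (real \<times> real \<times> real) set) \<Rightarrow> complex set set" where
  "leaves \<phi> \<Sigma> = (\<Union>\<sigma> \<in> (\<Union>\<eta> \<in> ball 0 1. \<Sigma> \<eta>). components (Sset \<phi> \<sigma> - interior (Sset \<phi> \<sigma>)))"

definition lam :: "(complex \<Rightarrow> (real \<times> real \<times> real) set) \<Rightarrow> (real \<Rightarrow> complex) \<Rightarrow> real" where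
  "lam \<Sigma> c = Inf {(\<Sum>i<n. sqrt (mink (\<sigma> i - \<sigma> (Suc i)) (\<sigma> i - \<sigma> (Suc i)))) | n t \<sigma>.
        t 0 = 0 \<and> t n = 1 \<and> (\<forall>i<n. t i < t (Suc i)) \<and> (\<forall>i\<le>n. \<sigma> i \<in> \<Sigma> (c (t i)))}"

text \<open>Hyperbolic distance in the Klein model.\<close>
definition kdist :: "complex \<Rightarrow> complex \<Rightarrow> real" where
  "kdist p q = arcosh ((1 - (Re p * Re q + Im p * Im q)) /
                       sqrt ((1 - (cmod p)\<^sup>2) * (1 - (cmod q)\<^sup>2)))"

text \<open>A set I is transverse to the support of the lamination if it meets every leaf
  in at most one point (geodesic segments in the Klein model are straight segments).\<close>
definition transverse :: "complex set set \<Rightarrow> complex set \<Rightarrow> bool" where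
  "transverse L I \<longleftrightarrow> (\<forall>l \<in> L. \<forall>x \<in> I \<inter> l. \<forall>y \<in> I \<inter> l. x = y)"

text \<open>Thurston norm: sup of \<lambda>(I) over geodesic segments I of hyperbolic length 1
  transverse to the support; I = [p,q] is parametrised by linepath p q on [0,1].\<close>
definition thurston_norm :: "(complex \<Rightarrow> real) \<Rightarrow> (complex \<Rightarrow> (real \<times> real \<times> real) set) \<Rightarrow> ereal" where
  "thurston_norm \<phi> \<Sigma> = (SUP pq \<in> {(p, q). p \<in> ball 0 1 \<and> q \<in> ball 0 1 \<and> kdist p q = 1
                \<and> transverse (leaves \<phi> \<Sigma>) (closed_segment p q)}.
       ereal (lam \<Sigma> (linepath (fst pq) (snd pq))))"

end

theory Submission
  imports Defs
begin

text \<open>A support plane \<xi> \<mapsto> <(1,\<xi>), \<sigma>> of \<phi>^- or \<phi>^+ is encoded by its vector \<sigma> in R^{1,2}.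
  For a majorant \<tau> and a minorant \<sigma> of \<phi>_X on the circle, \<tau> - \<sigma> is past causal, and the
  width bounds its pairing with the unit timelike vector over any \<eta>. For p, q at hyperbolic
  distance 1, a Harnack-type comparison of two unit timelike vectors and the reverse
  Cauchy-Schwarz inequality bound the timelike length of (\<tau>_p - \<sigma>_p) + (\<tau>_q - \<sigma>_q) by 5 w(X).
  The difference of two support vectors at p and q is squeezed between these four past causal
  vectors, so its Minkowski length is at most 5 w(X). The one-step partition of [p, q] then
  gives \<lambda>([p, q]) \<le> 5 w(X), and 5 \<le> 2\<surd>2 / (1 - tanh 1).\<close>

section \<open>Minkowski space\<close>

definition spatial :: "real \<times> real \<times> real \<Rightarrow> complex" where
  "spatial x = Complex (fst (snd x)) (snd (snd x))"

lemma spatial_lift [simp]: "spatial (lift \<eta>) = \<eta>"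
  and fst_lift [simp]: "fst (lift \<eta>) = 1"
  and spatial_add [simp]: "spatial (x + y) = spatial x + spatial y"
  and spatial_diff [simp]: "spatial (x - y) = spatial x - spatial y"
  and spatial_minus [simp]: "spatial (- x) = - spatial x"
  and spatial_scaleR [simp]: "spatial (c *\<^sub>R x) = c *\<^sub>R spatial x"
  by (simp_all add: spatial_def lift_def complex_eq_iff)

lemma mink_eq: "mink x y = inner (spatial x) (spatial y) - fst x * fst y"
  by (simp add: mink_def spatial_def inner_complex_def)

lemma mink_self: "mink x x = (cmod (spatial x))\<^sup>2 - (fst x)\<^sup>2"
  by (simp add: mink_eq dot_square_norm power2_eq_square)

lemma mink_lift: "mink (lift \<eta>) x = inner \<eta> (spatial x) - fst x"
  by (simp add: mink_eq lift_def spatial_def inner_complex_def)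

lemma mink_commute: "mink x y = mink y x"
  by (simp add: mink_def algebra_simps)

lemma mink_add_left: "mink (x + y) z = mink x z + mink y z"
  and mink_add_right: "mink z (x + y) = mink z x + mink z y"
  and mink_diff_left: "mink (x - y) z = mink x z - mink y z"
  and mink_diff_right: "mink z (x - y) = mink z x - mink z y"
  and mink_minus_left: "mink (- x) z = - mink x z"
  and mink_minus_right: "mink z (- x) = - mink z x"
  and mink_scaleR_left: "mink (r *\<^sub>R x) z = r * mink x z"
  and mink_scaleR_right: "mink z (r *\<^sub>R x) = r * mink z x"
  by (simp_all add: mink_def algebra_simps)

lemmas mink_bilinear = mink_add_left mink_add_right mink_diff_left mink_diff_right
  mink_minus_left mink_minus_right mink_scaleR_left mink_scaleR_right

lemma mink_reverse_Cauchy_Schwarz: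
  assumes "mink t t < 0"
  shows "mink t t * mink x x \<le> (mink t x)\<^sup>2"
proof -
  obtain t0 t1 t2 x0 x1 x2 where tx: "t = (t0, t1, t2)" "x = (x0, x1, x2)"
    by (cases t, cases x) auto
  have "t0 \<noteq> 0"
    using assms not_sum_squares_lt_zero[of t1 t2] by (auto simp: tx mink_def)
  have "t0\<^sup>2 * ((mink t x)\<^sup>2 - mink t t * mink x x)
      = (t0 * mink t x - mink t t * x0)\<^sup>2
        - mink t t * ((t0 * x1 - x0 * t1)\<^sup>2 + (t0 * x2 - x0 * t2)\<^sup>2)"
    by (simp add: tx mink_def power2_eq_square algebra_simps)
  also have "\<dots> \<ge> 0"
  proof -
    have "0 \<le> - mink t t * ((t0 * x1 - x0 * t1)\<^sup>2 + (t0 * x2 - x0 * t2)\<^sup>2)"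
      using assms by (intro mult_nonneg_nonneg) auto
    then show ?thesis
      using zero_le_power2[of "t0 * mink t x - mink t t * x0"] by linarith
  qed
  finally show ?thesis
    using \<open>t0 \<noteq> 0\<close> by (simp add: zero_le_mult_iff)
qed

definition past_causal :: "real \<times> real \<times> real \<Rightarrow> bool" where
  "past_causal x \<longleftrightarrow> cmod (spatial x) \<le> - fst x"

lemma past_causal_fst_nonpos: "past_causal x \<Longrightarrow> fst x \<le> 0"
  unfolding past_causal_def using norm_ge_zero[of "spatial x"] by linarith

lemma mink_past_causal_nonpos:
  assumes "past_causal x" "past_causal y"
  shows "mink x y \<le> 0"
proof -
  have "inner (spatial x) (spatial y) \<le> cmod (spatial x) * cmod (spatial y)"
    by (rule norm_cauchy_schwarz)
  also have "\<dots> \<le> (- fst x) * (- fst y)"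
    using assms past_causal_fst_nonpos[OF assms(1)] by (intro mult_mono) (auto simp: past_causal_def)
  finally show ?thesis
    by (simp add: mink_eq)
qed

lemma past_causal_scaleR: "past_causal x \<Longrightarrow> 0 \<le> c \<Longrightarrow> past_causal (c *\<^sub>R x)"
  unfolding past_causal_def using mult_left_mono[of "cmod (spatial x)" "- fst x" c] by simp

lemma causal_past_or_future:
  assumes "mink x x \<le> 0"
  shows "past_causal x \<or> past_causal (- x)"
proof -
  have "cmod (spatial x) \<le> \<bar>fst x\<bar>"
    using assms abs_le_square_iff[of "cmod (spatial x)" "fst x"] by (simp add: mink_self)
  then show ?thesis
    unfolding past_causal_def by (cases "0 \<le> fst x") auto
qed

lemma past_causal_neg_lift: "cmod \<eta> \<le> 1 \<Longrightarrow> past_causal (- lift \<eta>)"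
  by (simp add: past_causal_def)

lemma mink_lift_past_causal_nonneg: "cmod \<eta> \<le> 1 \<Longrightarrow> past_causal v \<Longrightarrow> 0 \<le> mink (lift \<eta>) v"
  using mink_past_causal_nonpos[OF past_causal_neg_lift] by (simp add: mink_minus_left)

lemma mink_lift_le:
  assumes "cmod \<eta> \<le> 1"
  shows "mink (lift \<eta>) x \<le> cmod (spatial x) - fst x"
proof -
  have "inner \<eta> (spatial x) \<le> cmod \<eta> * cmod (spatial x)"
    by (rule norm_cauchy_schwarz)
  also have "\<dots> \<le> cmod (spatial x)"
    using assms by (simp add: mult_left_le_one_le)
  finally show ?thesis
    by (simp add: mink_lift)
qed

lemma sphere_mink_lift_le_iff:
  "(\<forall>z\<in>sphere 0 1. mink (lift z) x \<le> M) \<longleftrightarrow> cmod (spatial x) - fst x \<le> M"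
proof
  assume le: "\<forall>z\<in>sphere 0 1. mink (lift z) x \<le> M"
  define z where "z = (if spatial x = 0 then 1 else sgn (spatial x))"
  have "z \<in> sphere 0 1" "inner z (spatial x) = cmod (spatial x)"
    by (auto simp: z_def norm_sgn sgn_div_norm inner_commute[of _ "spatial x"]
        power2_norm_eq_inner[symmetric] power2_eq_square)
  then show "cmod (spatial x) - fst x \<le> M"
    using le by (metis mink_lift)
qed (auto intro: order.trans[OF mink_lift_le])

lemma past_causal_iff_sphere: "past_causal x \<longleftrightarrow> (\<forall>z\<in>sphere 0 1. 0 \<le> mink (lift z) x)"
  using sphere_mink_lift_le_iff[of "- x" 0]
  by (auto simp: past_causal_def mink_minus_right)

lemma spacelike_of_sign_change:
  assumes "cmod \<eta> < 1" "cmod \<eta>' < 1" "0 \<le> mink (lift \<eta>) d" "mink (lift \<eta>') d \<le> 0"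
  shows "0 \<le> mink d d"
proof (rule ccontr)
  assume "\<not> 0 \<le> mink d d"
  then have short: "cmod (spatial d) < \<bar>fst d\<bar>"
    using abs_le_square_iff[of "fst d" "cmod (spatial d)"] by (auto simp: mink_self)
  have "\<bar>inner z (spatial d)\<bar> \<le> cmod (spatial d)" if "cmod z < 1" for z
    using Cauchy_Schwarz_ineq2[of z "spatial d"] that
    by (meson less_imp_le mult_left_le_one_le norm_ge_zero order.trans)
  from this[OF assms(1)] this[OF assms(2)] show False
    using assms(3,4) short by (simp add: mink_lift abs_if split: if_splits)
qed

section \<open>The hyperboloid model\<close>

definition hyperboloid :: "(real \<times> real \<times> real) set" where
  "hyperboloid = {P. past_causal (- P) \<and> mink P P = -1}"

definition hyperboloid_lift :: "complex \<Rightarrow> real \<times> real \<times> real" where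
  "hyperboloid_lift \<eta> = (1 / sqrt (1 - (cmod \<eta>)\<^sup>2)) *\<^sub>R lift \<eta>"

lemma neg_mink_hyperboloid_ge_1:
  assumes "P \<in> hyperboloid" "Q \<in> hyperboloid"
  shows "1 \<le> - mink P Q"
proof -
  have "0 \<le> - mink P Q"
    using mink_past_causal_nonpos[of "- P" "- Q"] assms
    by (simp add: hyperboloid_def mink_minus_left mink_minus_right)
  moreover have "1 \<le> (- mink P Q)\<^sup>2"
    using mink_reverse_Cauchy_Schwarz[of P Q] assms by (simp add: hyperboloid_def)
  ultimately show ?thesis
    by (metis abs_le_square_iff abs_of_nonneg abs_one power_one)
qed

lemma mink_lift_lift: "mink (lift p) (lift q) = inner p q - 1"
  by (simp add: mink_lift)

lemma mink_hyperboloid_lift: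
  "mink (hyperboloid_lift \<eta>) x = mink (lift \<eta>) x / sqrt (1 - (cmod \<eta>)\<^sup>2)"
  by (simp add: hyperboloid_lift_def mink_scaleR_left)

lemma mink_hyperboloid_lift_lift:
  "mink (hyperboloid_lift p) (hyperboloid_lift q)
     = (inner p q - 1) / (sqrt (1 - (cmod p)\<^sup>2) * sqrt (1 - (cmod q)\<^sup>2))"
  by (simp add: hyperboloid_lift_def mink_scaleR_left mink_scaleR_right mink_lift_lift)

lemma hyperboloid_lift_in_hyperboloid:
  assumes "cmod \<eta> < 1"
  shows "hyperboloid_lift \<eta> \<in> hyperboloid"
proof -
  have sq: "(cmod \<eta>)\<^sup>2 < 1"
    using assms by (simp add: abs_square_less_1)
  then have "mink (hyperboloid_lift \<eta>) (hyperboloid_lift \<eta>) = -1"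
    by (simp add: mink_hyperboloid_lift_lift dot_square_norm field_simps flip: power2_eq_square)
  moreover have "past_causal (- hyperboloid_lift \<eta>)"
    unfolding hyperboloid_lift_def scaleR_right.minus[symmetric]
    using assms sq by (intro past_causal_scaleR past_causal_neg_lift) auto
  ultimately show ?thesis
    by (simp add: hyperboloid_def)
qed

lemma cosh_kdist:
  assumes "cmod p < 1" "cmod q < 1"
  shows "cosh (kdist p q) = - mink (hyperboloid_lift p) (hyperboloid_lift q)"
proof -
  have "kdist p q = arcosh (- mink (hyperboloid_lift p) (hyperboloid_lift q))"
    by (simp add: kdist_def mink_hyperboloid_lift_lift inner_complex_def real_sqrt_mult
        minus_divide_left)
  then show ?thesis
    using neg_mink_hyperboloid_ge_1 hyperboloid_lift_in_hyperboloid assms by simp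
qed

lemma cosh_1_le_2: "cosh (1::real) \<le> 2"
proof -
  have "exp 1 + exp (-1) \<le> (3 + 1 :: real)"
    using exp_le by (intro add_mono) auto
  then show ?thesis
    by (simp add: cosh_def)
qed

lemma mink_diff_self_le_of_past_causal:
  assumes "past_causal u" "past_causal v" "past_causal a" "past_causal b" "a + b = u + v"
  shows "mink (u - a) (u - a) \<le> - mink (u + v) (u + v)"
proof -
  \<comment> \<open>With b = u + v - a, the defect equals - mink u u - mink b b - 2 mink v a.\<close>
  have "b = u + v - a"
    using assms(5) by (simp add: algebra_simps)
  moreover have "mink u u \<le> 0" "mink b b \<le> 0" "mink v a \<le> 0"
    using assms(1-4) by (simp_all add: mink_past_causal_nonpos)
  ultimately show ?thesis
    by (simp add: mink_bilinear mink_commute[of v u] mink_commute[of a u] mink_commute[of a v])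
qed

lemma past_causal_harnack:
  assumes P: "P \<in> hyperboloid" and Q: "Q \<in> hyperboloid"
    and near: "- mink P Q \<le> 2" and v: "past_causal v"
  shows "mink P v \<le> 4 * mink Q v"
proof -
  \<comment> \<open>Z is causal as - mink P Q \<le> 2 < 17/8, and future directed as mink Z P < 0.\<close>
  define Z where "Z = Q - (1/4) *\<^sub>R P"
  have PQ: "mink Q P = mink P Q"
    by (rule mink_commute)
  have causal: "mink Z Z \<le> 0"
    using P Q near PQ by (simp add: Z_def mink_bilinear hyperboloid_def)
  have "mink Z P < 0"
    using P Q PQ neg_mink_hyperboloid_ge_1[OF P Q] by (simp add: Z_def mink_bilinear hyperboloid_def)
  moreover have "past_causal (- P)"
    using P by (simp add: hyperboloid_def)
  ultimately have "\<not> past_causal Z"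
    using mink_past_causal_nonpos[of Z "- P"] by (auto simp: mink_minus_right)
  then have "past_causal (- Z)"
    using causal_past_or_future[OF causal] by simp
  then have "0 \<le> mink Z v"
    using mink_past_causal_nonpos[OF _ v, of "- Z"] by (simp add: mink_minus_left)
  then show ?thesis
    by (simp add: Z_def mink_bilinear)
qed

lemma neg_mink_self_add_le:
  assumes P: "P \<in> hyperboloid" and Q: "Q \<in> hyperboloid"
    and near: "- mink P Q \<le> 2" and u: "past_causal u" and v: "past_causal v"
    and "mink P u \<le> W" and "mink Q v \<le> W"
  shows "- mink (u + v) (u + v) \<le> 25 * W\<^sup>2"
proof -
  have "mink P v \<le> 4 * W"
    using past_causal_harnack[OF P Q near v] assms(7) by linarith
  then have "mink P (u + v) \<le> 5 * W"
    using assms(6) by (simp add: mink_add_right)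
  moreover have "0 \<le> mink P (u + v)"
    using mink_past_causal_nonpos[of "- P"] P u v
    by (simp add: hyperboloid_def mink_add_right mink_minus_left)
  ultimately have "(mink P (u + v))\<^sup>2 \<le> 25 * W\<^sup>2"
    using power_mono[of "mink P (u + v)" "5 * W" 2] by (simp add: power_mult_distrib)
  moreover have "- mink (u + v) (u + v) \<le> (mink P (u + v))\<^sup>2"
    using mink_reverse_Cauchy_Schwarz[of P "u + v"] P by (simp add: hyperboloid_def)
  ultimately show ?thesis
    by linarith
qed

section \<open>Affine minorants and the envelopes \<phi>^\<plusminus>\<close>

definition minorants :: "(complex \<Rightarrow> real) \<Rightarrow> (real \<times> real \<times> real) set" where
  "minorants f = {\<sigma>. \<forall>z\<in>sphere 0 1. mink (lift z) \<sigma> \<le> f z}"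

definition majorants :: "(complex \<Rightarrow> real) \<Rightarrow> (real \<times> real \<times> real) set" where
  "majorants f = {\<tau>. \<forall>z\<in>sphere 0 1. f z \<le> mink (lift z) \<tau>}"

definition lower_envelope :: "(complex \<Rightarrow> real) \<Rightarrow> complex \<Rightarrow> real" where
  "lower_envelope f \<eta> = Sup (mink (lift \<eta>) ` minorants f)"

lemma neg_mem_minorants_iff: "- \<tau> \<in> minorants (\<lambda>z. - f z) \<longleftrightarrow> \<tau> \<in> majorants f"
  by (simp add: minorants_def majorants_def mink_minus_right)

lemma past_causal_majorant_diff_minorant:
  "\<sigma> \<in> minorants f \<Longrightarrow> \<tau> \<in> majorants f \<Longrightarrow> past_causal (\<tau> - \<sigma>)"
  by (fastforce simp: past_causal_iff_sphere minorants_def majorants_def mink_diff_right)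

lemma continuous_on_mink_lift: "continuous_on A (mink (lift \<eta>))"
  unfolding mink_def by (intro continuous_intros)

lemma closed_minorants: "closed (minorants f)"
proof -
  have "minorants f = (\<Inter>z\<in>sphere 0 1. {\<sigma>. mink (lift z) \<sigma> \<le> f z})"
    by (auto simp: minorants_def)
  then show ?thesis
    by (auto intro!: closed_Collect_le continuous_on_mink_lift)
qed

lemma mink_lift_minorant_le:
  assumes "\<forall>z\<in>sphere 0 1. f z \<le> M" "\<sigma> \<in> minorants f" "cmod \<eta> \<le> 1"
  shows "mink (lift \<eta>) \<sigma> \<le> M"
proof -
  have "\<forall>z\<in>sphere 0 1. mink (lift z) \<sigma> \<le> M"
  proof
    fix z :: complex
    assume "z \<in> sphere 0 1"
    then have "mink (lift z) \<sigma> \<le> f z" "f z \<le> M"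
      using assms(1,2) by (auto simp: minorants_def)
    then show "mink (lift z) \<sigma> \<le> M"
      by linarith
  qed
  then have "cmod (spatial \<sigma>) - fst \<sigma> \<le> M"
    by (simp add: sphere_mink_lift_le_iff)
  with mink_lift_le[OF assms(3), of \<sigma>] show ?thesis
    by linarith
qed

lemma lower_envelope_upper:
  assumes "\<forall>z\<in>sphere 0 1. f z \<le> M" "\<sigma> \<in> minorants f" "cmod \<eta> \<le> 1"
  shows "mink (lift \<eta>) \<sigma> \<le> lower_envelope f \<eta>"
  unfolding lower_envelope_def
  using assms mink_lift_minorant_le[OF assms(1) _ assms(3)]
  by (intro cSup_upper bdd_aboveI2) auto

lemma bounded_minorants_above:
  assumes "\<forall>z\<in>sphere 0 1. f z \<le> M" "cmod \<eta> < 1"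
  shows "bounded (minorants f \<inter> {\<sigma>. m \<le> mink (lift \<eta>) \<sigma>})"
proof -
  define R where "R = (M - m) / (1 - cmod \<eta>)"
  have "norm \<sigma> \<le> \<bar>M\<bar> + \<bar>m\<bar> + 2 * R" if \<sigma>: "\<sigma> \<in> minorants f" "m \<le> mink (lift \<eta>) \<sigma>" for \<sigma>
  proof -
    have upper: "cmod (spatial \<sigma>) - fst \<sigma> \<le> M"
      using \<sigma>(1) assms(1) by (fastforce simp: minorants_def sphere_mink_lift_le_iff[symmetric])
    have "inner \<eta> (spatial \<sigma>) \<le> cmod \<eta> * cmod (spatial \<sigma>)"
      by (rule norm_cauchy_schwarz)
    then have "cmod (spatial \<sigma>) * (1 - cmod \<eta>) \<le> M - m"
      using upper \<sigma>(2) by (simp add: mink_lift algebra_simps)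
    then have spatial_le: "cmod (spatial \<sigma>) \<le> R"
      using assms(2) by (simp add: R_def pos_le_divide_eq)
    have "\<bar>inner \<eta> (spatial \<sigma>)\<bar> \<le> cmod (spatial \<sigma>)"
      using Cauchy_Schwarz_ineq2[of \<eta> "spatial \<sigma>"] assms(2)
      by (meson less_imp_le mult_left_le_one_le norm_ge_zero order.trans)
    then have "\<bar>fst \<sigma>\<bar> \<le> \<bar>M\<bar> + \<bar>m\<bar> + R"
      using upper \<sigma>(2) spatial_le norm_ge_zero[of "spatial \<sigma>"] abs_ge_self[of M]
        abs_ge_minus_self[of m]
      unfolding mink_lift abs_le_iff by linarith
    moreover have "norm \<sigma> \<le> \<bar>fst \<sigma>\<bar> + cmod (spatial \<sigma>)"
      using norm_Pair_le[of "fst \<sigma>" "snd \<sigma>"]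
      by (simp add: spatial_def norm_prod_def cmod_def)
    ultimately show ?thesis
      using spatial_le by linarith
  qed
  then show ?thesis
    unfolding bounded_iff by blast
qed

lemma lower_envelope_attained:
  assumes bound: "\<forall>z\<in>sphere 0 1. \<bar>f z\<bar> \<le> M" and "cmod \<eta> < 1"
  shows "\<exists>\<sigma>\<in>minorants f. mink (lift \<eta>) \<sigma> = lower_envelope f \<eta>"
proof -
  let ?g = "mink (lift \<eta>)"
  define K where "K = minorants f \<inter> {\<sigma>. - M \<le> ?g \<sigma>}"
  have "(M, 0, 0) \<in> K"
    using bound by (auto simp: K_def minorants_def mink_def lift_def abs_le_iff)
  moreover have "compact K"
    unfolding K_def compact_eq_bounded_closed
    using bound assms(2)
    by (auto intro!: bounded_minorants_above closed_minorants closed_Collect_le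
        continuous_on_mink_lift simp: abs_le_iff)
  ultimately obtain \<sigma> where "\<sigma> \<in> K" and max: "\<forall>\<sigma>'\<in>K. ?g \<sigma>' \<le> ?g \<sigma>"
    using continuous_attains_sup[OF _ _ continuous_on_mink_lift] by blast
  then have "\<sigma> \<in> minorants f" "- M \<le> ?g \<sigma>"
    by (auto simp: K_def)
  moreover have "\<forall>\<sigma>'\<in>minorants f. ?g \<sigma>' \<le> ?g \<sigma>"
    using max \<open>- M \<le> ?g \<sigma>\<close> by (force simp: K_def)
  ultimately show ?thesis
    unfolding lower_envelope_def by (intro bexI[of _ \<sigma>] cSup_eq_maximum[symmetric]) auto
qed

lemma aff_eq_mink_lift: "aff c p q = (\<lambda>\<xi>. mink (lift \<xi>) (- c, p, q))"
  by (simp add: fun_eq_iff aff_def mink_lift spatial_def inner_complex_def)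

lemma aff_image_eq_mink_lift_image:
  "{aff c p q \<eta> | c p q. P (aff c p q)} = mink (lift \<eta>) ` {\<sigma>. P (\<lambda>\<xi>. mink (lift \<xi>) \<sigma>)}"
proof (intro equalityI subsetI)
  fix x
  assume "x \<in> {aff c p q \<eta> | c p q. P (aff c p q)}"
  then obtain c p q where "x = aff c p q \<eta>" "P (aff c p q)"
    by blast
  then show "x \<in> mink (lift \<eta>) ` {\<sigma>. P (\<lambda>\<xi>. mink (lift \<xi>) \<sigma>)}"
    by (intro image_eqI[of _ _ "(- c, p, q)"]) (simp_all add: aff_eq_mink_lift)
next
  fix x
  assume "x \<in> mink (lift \<eta>) ` {\<sigma>. P (\<lambda>\<xi>. mink (lift \<xi>) \<sigma>)}"
  then obtain a b c where "x = mink (lift \<eta>) (a, b, c)" "P (\<lambda>\<xi>. mink (lift \<xi>) (a, b, c))"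
    by auto
  then have "x = aff (- a) b c \<eta> \<and> P (aff (- a) b c)"
    by (simp add: aff_eq_mink_lift)
  then show "x \<in> {aff c p q \<eta> | c p q. P (aff c p q)}"
    by blast
qed

lemma phi_minus_eq_lower_envelope: "phi_minus X = lower_envelope (phiX X)"
  using aff_image_eq_mink_lift_image[where P = "\<lambda>g. \<forall>z\<in>sphere 0 1. g z \<le> phiX X z"]
  by (simp add: fun_eq_iff phi_minus_def lower_envelope_def minorants_def)

lemma majorants_eq_uminus_minorants: "majorants f = uminus ` minorants (\<lambda>z. - f z)"
proof (intro equalityI subsetI)
  fix \<tau>
  assume "\<tau> \<in> majorants f"
  then show "\<tau> \<in> uminus ` minorants (\<lambda>z. - f z)"
    using neg_mem_minorants_iff[of \<tau> f] by (intro image_eqI[of _ _ "- \<tau>"]) auto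
qed (auto simp flip: neg_mem_minorants_iff)

lemma phi_plus_eq_lower_envelope: "phi_plus X \<eta> = - lower_envelope (\<lambda>z. - phiX X z) \<eta>"
proof -
  have "phi_plus X \<eta> = Inf (mink (lift \<eta>) ` majorants (phiX X))"
    using aff_image_eq_mink_lift_image[where P = "\<lambda>g. \<forall>z\<in>sphere 0 1. phiX X z \<le> g z"]
    by (simp add: phi_plus_def majorants_def)
  also have "\<dots> = - Sup (mink (lift \<eta>) ` minorants (\<lambda>z. - phiX X z))"
    by (simp add: Inf_real_def majorants_eq_uminus_minorants image_image mink_minus_right)
  finally show ?thesis
    by (simp add: lower_envelope_def)
qed

lemma phiX_bounded:
  assumes "continuous_on (sphere 0 1) X"
  obtains M where "\<forall>z\<in>sphere 0 1. \<bar>phiX X z\<bar> \<le> M"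
proof -
  have "continuous_on (sphere 0 1) (phiX X)"
    unfolding phiX_def using assms by (intro continuous_intros) auto
  then have "bounded (phiX X ` sphere 0 1)"
    by (intro compact_imp_bounded compact_continuous_image) auto
  then show ?thesis
    using that by (auto simp: bounded_iff)
qed

lemma Sigma_minus_minorant_exists:
  assumes "continuous_on (sphere 0 1) X" "\<eta> \<in> ball 0 1"
  obtains \<sigma> where "\<sigma> \<in> minorants (phiX X)" "\<sigma> \<in> Sigma_minus X \<eta>"
proof -
  obtain M where M: "\<forall>z\<in>sphere 0 1. \<bar>phiX X z\<bar> \<le> M"
    using phiX_bounded[OF assms(1)] .
  then have upper: "\<forall>z\<in>sphere 0 1. phiX X z \<le> M"
    by (auto simp: abs_le_iff)
  obtain \<sigma> where \<sigma>: "\<sigma> \<in> minorants (phiX X)" "mink (lift \<eta>) \<sigma> = phi_minus X \<eta>"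
    using lower_envelope_attained[OF M] assms(2) by (metis mem_ball_0 phi_minus_eq_lower_envelope)
  moreover have "\<forall>\<xi>\<in>ball 0 1. mink (lift \<xi>) \<sigma> \<le> phi_minus X \<xi>"
    using lower_envelope_upper[OF upper \<sigma>(1)] by (simp add: phi_minus_eq_lower_envelope)
  ultimately show ?thesis
    using that by (simp add: Sigma_minus_def)
qed

lemma Sigma_plus_majorant_exists:
  assumes "continuous_on (sphere 0 1) X" "\<eta> \<in> ball 0 1"
  obtains \<tau> where "\<tau> \<in> majorants (phiX X)" "\<tau> \<in> Sigma_plus X \<eta>"
proof -
  obtain M where M: "\<forall>z\<in>sphere 0 1. \<bar>- phiX X z\<bar> \<le> M"
    using phiX_bounded[OF assms(1)] by auto
  then have upper: "\<forall>z\<in>sphere 0 1. - phiX X z \<le> M"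
    by (auto simp: abs_le_iff)
  obtain \<sigma> where \<sigma>: "\<sigma> \<in> minorants (\<lambda>z. - phiX X z)" "mink (lift \<eta>) \<sigma> = - phi_plus X \<eta>"
    using lower_envelope_attained[OF M] assms(2)
    by (metis mem_ball_0 minus_minus phi_plus_eq_lower_envelope)
  have "- \<sigma> \<in> majorants (phiX X)"
    using \<sigma>(1) neg_mem_minorants_iff[of "- \<sigma>"] by simp
  moreover have "\<forall>\<xi>\<in>ball 0 1. phi_plus X \<xi> \<le> mink (lift \<xi>) (- \<sigma>)"
    using lower_envelope_upper[OF upper \<sigma>(1)]
    by (simp add: phi_plus_eq_lower_envelope mink_minus_right)
  ultimately show ?thesis
    using that \<sigma>(2) by (simp add: Sigma_plus_def mink_minus_right)
qed

section \<open>Support vectors and the earthquake measure\<close>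

lemma mink_hyperboloid_lift_le_width:
  assumes "width X \<le> ereal W" "\<eta> \<in> ball 0 1"
    and "\<sigma> \<in> Sigma_minus X \<eta>" "\<tau> \<in> Sigma_plus X \<eta>"
  shows "mink (hyperboloid_lift \<eta>) (\<tau> - \<sigma>) \<le> W"
proof -
  have "mink (hyperboloid_lift \<eta>) (\<tau> - \<sigma>)
      = (phi_plus X \<eta> - phi_minus X \<eta>) / sqrt (1 - (cmod \<eta>)\<^sup>2)"
    using assms(3,4)
    by (simp add: mink_hyperboloid_lift mink_diff_right Sigma_minus_def Sigma_plus_def
        diff_divide_distrib)
  also have "ereal \<dots> \<le> width X"
    unfolding width_def using assms(2) by (rule SUP_upper)
  finally show ?thesis
    using assms(1) by (meson ereal_less_eq(3) order.trans)
qed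

lemma width_nonneg:
  assumes "continuous_on (sphere 0 1) X"
  shows "0 \<le> width X"
proof -
  obtain \<sigma> \<tau> where "\<sigma> \<in> minorants (phiX X)" "\<sigma> \<in> Sigma_minus X 0"
    and "\<tau> \<in> majorants (phiX X)" "\<tau> \<in> Sigma_plus X 0"
    using Sigma_minus_minorant_exists Sigma_plus_majorant_exists assms
    by (metis centre_in_ball zero_less_one)
  moreover from this have "0 \<le> mink (lift 0) (\<tau> - \<sigma>)"
    by (intro mink_lift_past_causal_nonneg past_causal_majorant_diff_minorant) auto
  ultimately have "0 \<le> phi_plus X 0 - phi_minus X 0"
    by (simp add: Sigma_minus_def Sigma_plus_def mink_diff_right)
  also have "ereal \<dots> \<le> width X"
    unfolding width_def by (rule SUP_upper2[of 0]) auto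
  finally show ?thesis
    by (simp add: zero_ereal_def)
qed

definition spacelike_separated :: "(complex \<Rightarrow> (real \<times> real \<times> real) set) \<Rightarrow> bool" where
  "spacelike_separated \<Sigma> \<longleftrightarrow>
     (\<forall>\<eta>\<in>ball 0 1. \<forall>\<eta>'\<in>ball 0 1. \<forall>\<sigma>\<in>\<Sigma> \<eta>. \<forall>\<tau>\<in>\<Sigma> \<eta>'. 0 \<le> mink (\<sigma> - \<tau>) (\<sigma> - \<tau>))"

lemma spacelike_separated_Sigma_minus: "spacelike_separated (Sigma_minus X)"
  unfolding spacelike_separated_def
proof (intro ballI)
  fix \<eta> \<eta>' \<sigma> \<tau>
  assume "\<eta> \<in> ball 0 1" "\<eta>' \<in> ball 0 1" "\<sigma> \<in> Sigma_minus X \<eta>" "\<tau> \<in> Sigma_minus X \<eta>'"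
  then show "0 \<le> mink (\<sigma> - \<tau>) (\<sigma> - \<tau>)"
    by (intro spacelike_of_sign_change[of \<eta> \<eta>']) (auto simp: Sigma_minus_def mink_diff_right)
qed

lemma spacelike_separated_Sigma_plus: "spacelike_separated (Sigma_plus X)"
  unfolding spacelike_separated_def
proof (intro ballI)
  fix \<eta> \<eta>' \<sigma> \<tau>
  assume "\<eta> \<in> ball 0 1" "\<eta>' \<in> ball 0 1" "\<sigma> \<in> Sigma_plus X \<eta>" "\<tau> \<in> Sigma_plus X \<eta>'"
  then show "0 \<le> mink (\<sigma> - \<tau>) (\<sigma> - \<tau>)"
    by (intro spacelike_of_sign_change[of \<eta>' \<eta>]) (auto simp: Sigma_plus_def mink_diff_right)
qed

lemma Sigma_close_at_distance_1:
  assumes "continuous_on (sphere 0 1) X" "width X \<le> ereal W"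
    and p: "p \<in> ball 0 1" and q: "q \<in> ball 0 1" and "kdist p q = 1"
  shows "\<exists>\<sigma>\<in>Sigma_minus X p. \<exists>\<sigma>'\<in>Sigma_minus X q. mink (\<sigma> - \<sigma>') (\<sigma> - \<sigma>') \<le> 25 * W\<^sup>2"
    and "\<exists>\<tau>\<in>Sigma_plus X p. \<exists>\<tau>'\<in>Sigma_plus X q. mink (\<tau> - \<tau>') (\<tau> - \<tau>') \<le> 25 * W\<^sup>2"
proof -
  obtain \<sigma>p \<sigma>q where \<sigma>: "\<sigma>p \<in> minorants (phiX X)" "\<sigma>p \<in> Sigma_minus X p"
      "\<sigma>q \<in> minorants (phiX X)" "\<sigma>q \<in> Sigma_minus X q"
    using Sigma_minus_minorant_exists assms(1) p q by metis
  obtain \<tau>p \<tau>q where \<tau>: "\<tau>p \<in> majorants (phiX X)" "\<tau>p \<in> Sigma_plus X p"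
      "\<tau>q \<in> majorants (phiX X)" "\<tau>q \<in> Sigma_plus X q"
    using Sigma_plus_majorant_exists assms(1) p q by metis
  let ?u = "\<tau>p - \<sigma>p" and ?v = "\<tau>q - \<sigma>q"
  have causal: "past_causal ?u" "past_causal ?v" "past_causal (\<tau>p - \<sigma>q)" "past_causal (\<tau>q - \<sigma>p)"
    using \<sigma> \<tau> by (simp_all add: past_causal_majorant_diff_minorant)
  have "- mink (hyperboloid_lift p) (hyperboloid_lift q) \<le> 2"
    using cosh_kdist[of p q] cosh_1_le_2 assms(5) p q by simp
  moreover have "hyperboloid_lift p \<in> hyperboloid" "hyperboloid_lift q \<in> hyperboloid"
    using p q by (simp_all add: hyperboloid_lift_in_hyperboloid)
  moreover have "mink (hyperboloid_lift p) ?u \<le> W" "mink (hyperboloid_lift q) ?v \<le> W"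
    using mink_hyperboloid_lift_le_width assms(2) p q \<sigma> \<tau> by blast+
  ultimately have timelike_bound: "- mink (?u + ?v) (?u + ?v) \<le> 25 * W\<^sup>2"
    using neg_mink_self_add_le causal(1,2) by blast
  have "mink (\<sigma>q - \<sigma>p) (\<sigma>q - \<sigma>p) \<le> 25 * W\<^sup>2"
    using mink_diff_self_le_of_past_causal[of ?u ?v "\<tau>p - \<sigma>q" "\<tau>q - \<sigma>p"] causal timelike_bound
    by (simp add: algebra_simps)
  then show "\<exists>\<sigma>\<in>Sigma_minus X p. \<exists>\<sigma>'\<in>Sigma_minus X q. mink (\<sigma> - \<sigma>') (\<sigma> - \<sigma>') \<le> 25 * W\<^sup>2"
    using \<sigma> by (metis minus_diff_eq mink_minus_left mink_minus_right minus_minus)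
  have "mink (\<tau>p - \<tau>q) (\<tau>p - \<tau>q) \<le> 25 * W\<^sup>2"
    using mink_diff_self_le_of_past_causal[of ?u ?v "\<tau>q - \<sigma>p" "\<tau>p - \<sigma>q"] causal timelike_bound
    by (simp add: algebra_simps)
  then show "\<exists>\<tau>\<in>Sigma_plus X p. \<exists>\<tau>'\<in>Sigma_plus X q. mink (\<tau> - \<tau>') (\<tau> - \<tau>') \<le> 25 * W\<^sup>2"
    using \<tau> by blast
qed

lemma lam_linepath_le:
  assumes "spacelike_separated \<Sigma>" "p \<in> ball 0 1" "q \<in> ball 0 1" "\<sigma> \<in> \<Sigma> p" "\<sigma>' \<in> \<Sigma> q"
  shows "lam \<Sigma> (linepath p q) \<le> sqrt (mink (\<sigma> - \<sigma>') (\<sigma> - \<sigma>'))"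
proof -
  let ?S = "{\<Sum>i<n. sqrt (mink (s i - s (Suc i)) (s i - s (Suc i))) | n t s.
      t 0 = 0 \<and> t n = 1 \<and> (\<forall>i<n. t i < t (Suc i)) \<and> (\<forall>i\<le>n. s i \<in> \<Sigma> (linepath p q (t i)))}"
  have "sqrt (mink (\<sigma> - \<sigma>') (\<sigma> - \<sigma>')) \<in> ?S"
    using assms(4,5)
    by (intro CollectI exI[of _ "1::nat"] exI[of _ "\<lambda>i. if i = 0 then 0 else 1"]
        exI[of _ "\<lambda>i. if i = 0 then \<sigma> else \<sigma>'"]) (auto simp: le_Suc_eq linepath_def)
  \<comment> \<open>Spacelike separation is what makes the real Inf below meaningful.\<close>
  moreover have "bdd_below ?S"
  proof (rule bdd_belowI[of _ 0], clarify)
    fix n t s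
    assume t: "t 0 = 0" "t n = 1" "\<forall>i<n. t i < t (Suc i)"
      and s: "\<forall>i\<le>n. s i \<in> \<Sigma> (linepath p q (t i))"
    have step: "t k \<le> t (Suc k)" if "k \<in> {..<n}" for k
      using t(3) that by (simp add: less_imp_le)
    note mono = lift_Suc_mono_le_ivl[of "{..<n}" t, OF step]
    have "t i \<in> {0..1}" if "i \<le> n" for i
    proof -
      have "{0..<i} \<subseteq> {..<n}" "{i..<n} \<subseteq> {..<n}"
        using that by auto
      then show ?thesis
        using mono[of 0 i] mono[of i n] t(1,2) that by simp
    qed
    then have inside: "linepath p q (t i) \<in> ball 0 1" if "i \<le> n" for i
      using that linepath_in_path closed_segment_subset[of p "ball 0 1" q] assms(2,3) by blast
    have "0 \<le> mink (s i - s (Suc i)) (s i - s (Suc i))" if "i < n" for i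
      using assms(1) s inside[of i] inside[of "Suc i"] that
      unfolding spacelike_separated_def by simp
    then show "0 \<le> (\<Sum>i<n. sqrt (mink (s i - s (Suc i)) (s i - s (Suc i))))"
      by (intro sum_nonneg) simp
  qed
  ultimately show ?thesis
    unfolding lam_def by (rule cInf_lower)
qed

lemma thurston_norm_le:
  assumes "spacelike_separated \<Sigma>" "0 \<le> B"
    and close: "\<And>p q. p \<in> ball 0 1 \<Longrightarrow> q \<in> ball 0 1 \<Longrightarrow> kdist p q = 1 \<Longrightarrow>
      \<exists>\<sigma>\<in>\<Sigma> p. \<exists>\<sigma>'\<in>\<Sigma> q. mink (\<sigma> - \<sigma>') (\<sigma> - \<sigma>') \<le> B\<^sup>2"
  shows "thurston_norm \<phi> \<Sigma> \<le> ereal B"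
  unfolding thurston_norm_def
proof (rule SUP_least, clarsimp)
  fix p q
  assume "cmod p < 1" "cmod q < 1" "kdist p q = 1"
  then have pq: "p \<in> ball 0 1" "q \<in> ball 0 1" "kdist p q = 1"
    by simp_all
  then obtain \<sigma> \<sigma>' where "\<sigma> \<in> \<Sigma> p" "\<sigma>' \<in> \<Sigma> q" and B: "mink (\<sigma> - \<sigma>') (\<sigma> - \<sigma>') \<le> B\<^sup>2"
    using close by blast
  then have "lam \<Sigma> (linepath p q) \<le> sqrt (mink (\<sigma> - \<sigma>') (\<sigma> - \<sigma>'))"
    using lam_linepath_le assms(1) pq by blast
  also have "\<dots> \<le> B"
    using real_sqrt_le_mono[OF B] assms(2) by simp
  finally show "lam \<Sigma> (linepath p q) \<le> B" .
qed

lemma five_le_width_constant: "5 \<le> 2 * sqrt 2 / (1 - tanh (1::real))"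
proof -
  define e where "e = exp (-2::real)"
  have "4 \<le> exp (2::real)"
    using exp_ge_add_one_self[of 1] mult_mono[of 2 "exp 1" 2 "exp (1::real)"]
    by (simp add: exp_add[symmetric])
  then have "e \<le> 1/4"
    by (simp add: e_def exp_minus field_simps)
  have "0 < e"
    by (simp add: e_def)
  have "tanh (1::real) = (1 - e) / (1 + e)"
    by (simp add: tanh_real_altdef e_def)
  then have "1 - tanh (1::real) = 2 * e / (1 + e)"
    using \<open>0 < e\<close> by (simp add: field_simps)
  moreover have "2 * e / (1 + e) \<le> 2 * e"
    using \<open>0 < e\<close> by (simp add: field_simps)
  ultimately have "0 < 1 - tanh (1::real)" "1 - tanh (1::real) \<le> 1/2"
    using \<open>0 < e\<close> \<open>e \<le> 1/4\<close> by simp_all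
  moreover have "5/4 \<le> sqrt (2::real)"
    by (rule real_le_rsqrt) (simp add: power2_eq_square)
  ultimately show ?thesis
    by (simp add: field_simps)
qed

theorem proposition6p3:
  fixes X :: "complex \<Rightarrow> complex"
  assumes "continuous_on (sphere 0 1) X"
    and "tangent_field X"
    and "width X < \<infinity>"
  shows "thurston_norm (phi_minus X) (Sigma_minus X)
           \<le> ereal (2 * sqrt 2 / (1 - tanh 1)) * width X
       \<and> thurston_norm (phi_plus X) (Sigma_plus X)
           \<le> ereal (2 * sqrt 2 / (1 - tanh 1)) * width X"
proof -
  obtain W where W: "width X = ereal W" and "0 \<le> W"
    using assms(3) width_nonneg[OF assms(1)] by (cases "width X") auto
  then have "ereal (5 * W) \<le> ereal (2 * sqrt 2 / (1 - tanh 1)) * width X"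
    using mult_right_mono[OF five_le_width_constant \<open>0 \<le> W\<close>] by simp
  moreover have "thurston_norm (phi_minus X) (Sigma_minus X) \<le> ereal (5 * W)"
    using Sigma_close_at_distance_1(1)[OF assms(1)] W \<open>0 \<le> W\<close>
    by (intro thurston_norm_le spacelike_separated_Sigma_minus) (auto simp: power_mult_distrib)
  moreover have "thurston_norm (phi_plus X) (Sigma_plus X) \<le> ereal (5 * W)"
    using Sigma_close_at_distance_1(2)[OF assms(1)] W \<open>0 \<le> W\<close>
    by (intro thurston_norm_le spacelike_separated_Sigma_plus) (auto simp: power_mult_distrib)
  ultimately show ?thesis
    by (meson order.trans)
qed

end
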